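(* For every positive integer $r$ and every graph $G$, if $\widetilde G$ is the graph obtained from $G$ by subdividing every edge $r$ times, then $\mathrm{cop}(\widetilde G)\le \mathrm{cop}(G)+1$.
   Context: All graphs are finite, undirected, without loops or multiple edges. Subdividing an edge $uv$ $r$ times means replacing it by a path from $u$ to $v$ with $r$ new internal vertices. Cops and Robber game on a connected graph: for an integer $k\ge 1$, the cop player places $k$ cops on (not necessarily distinct) vertices, then the robber is placed on a vertex; then, starting with the cops, the players alternate moves. In a cop move, each cop either stays or moves to an adjacent vertex; in a robber move, the robber stays or moves to an adjacent vertex. The cops win if at some point a cop and the robber occupy the same vertex. Both players have complete information. The cop number $\mathrm{cop}(G)$ of a connected graph $G$ is the smallest $k$ such that the cops have a winning strategy with $k$ cops; for a non-connected graph it is the maximum cop number of its connected components. *)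

theory Defs
  imports Main
begin

definition graph :: "'a set \<Rightarrow> ('a \<Rightarrow> 'a \<Rightarrow> bool) \<Rightarrow> bool" where
  "graph V E \<longleftrightarrow> finite V \<and> (\<forall>x y. E x y \<longrightarrow> x \<in> V \<and> y \<in> V)
     \<and> (\<forall>x y. E x y \<longrightarrow> E y x) \<and> (\<forall>x. \<not> E x x)"

definition restrict_edges :: "('a \<Rightarrow> 'a \<Rightarrow> bool) \<Rightarrow> 'a set \<Rightarrow> 'a \<Rightarrow> 'a \<Rightarrow> bool" where
  "restrict_edges E C x y \<longleftrightarrow> E x y \<and> x \<in> C \<and> y \<in> C"

definition component :: "('a \<Rightarrow> 'a \<Rightarrow> bool) \<Rightarrow> 'a \<Rightarrow> 'a set" where
  "component E x = {y. E\<^sup>*\<^sup>* x y}"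

definition components :: "'a set \<Rightarrow> ('a \<Rightarrow> 'a \<Rightarrow> bool) \<Rightarrow> 'a set set" where
  "components V E = {component E x | x. x \<in> V}"

definition cop_move :: "('a \<Rightarrow> 'a \<Rightarrow> bool) \<Rightarrow> 'a list \<Rightarrow> 'a list \<Rightarrow> bool" where
  "cop_move E cs cs' \<longleftrightarrow> length cs' = length cs \<and>
     (\<forall>i < length cs. cs' ! i = cs ! i \<or> E (cs ! i) (cs' ! i))"

definition robber_move :: "('a \<Rightarrow> 'a \<Rightarrow> bool) \<Rightarrow> 'a \<Rightarrow> 'a \<Rightarrow> bool" where
  "robber_move E r r' \<longleftrightarrow> r' = r \<or> E r r'"

text \<open>cops_force E cs r: in the position where the cops stand at cs, the robber
stands at r (not yet caught) and it is the cops' turn, the cops have a strategy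
that forces capture (least fixed point = attractor of the reachability game).\<close>

inductive cops_force :: "('a \<Rightarrow> 'a \<Rightarrow> bool) \<Rightarrow> 'a list \<Rightarrow> 'a \<Rightarrow> bool" for E where
  step: "cop_move E cs cs' \<Longrightarrow>
     (r \<in> set cs' \<or> (\<forall>r'. robber_move E r r' \<longrightarrow> r' \<in> set cs' \<or> cops_force E cs' r'))
     \<Longrightarrow> cops_force E cs r"

text \<open>k cops win on (V,E): they choose initial positions, then the robber chooses
his vertex (being caught immediately if it is a cop's vertex), then cops move first.\<close>

definition cops_win :: "'a set \<Rightarrow> ('a \<Rightarrow> 'a \<Rightarrow> bool) \<Rightarrow> nat \<Rightarrow> bool" where
  "cops_win V E k \<longleftrightarrow> (\<exists>cs. length cs = k \<and> set cs \<subseteq> V \<and>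
      (\<forall>r \<in> V. r \<in> set cs \<or> cops_force E cs r))"

definition cop_number_conn :: "'a set \<Rightarrow> ('a \<Rightarrow> 'a \<Rightarrow> bool) \<Rightarrow> nat" where
  "cop_number_conn V E = (LEAST k. 1 \<le> k \<and> cops_win V E k)"

definition cop_number :: "'a set \<Rightarrow> ('a \<Rightarrow> 'a \<Rightarrow> bool) \<Rightarrow> nat" where
  "cop_number V E = Max (insert 0
     {cop_number_conn C (restrict_edges E C) | C. C \<in> components V E})"

text \<open>The i-th internal vertex (1 \<le> i \<le> r, counted from u) of the path replacing
edge uv; it coincides with the (r+1-i)-th internal vertex counted from v.\<close>

definition sd_vertex :: "nat \<Rightarrow> 'a \<Rightarrow> 'a \<Rightarrow> nat \<Rightarrow> ('a \<times> 'a \<times> nat) set" where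
  "sd_vertex r u v i = {(u, v, i), (v, u, r + 1 - i)}"

definition subdiv_V :: "nat \<Rightarrow> 'a set \<Rightarrow> ('a \<Rightarrow> 'a \<Rightarrow> bool) \<Rightarrow> ('a + ('a \<times> 'a \<times> nat) set) set" where
  "subdiv_V r V E = Inl ` V \<union> {Inr (sd_vertex r u v i) | u v i. E u v \<and> 1 \<le> i \<and> i \<le> r}"

definition subdiv_step :: "nat \<Rightarrow> ('a \<Rightarrow> 'a \<Rightarrow> bool) \<Rightarrow>
    ('a + ('a \<times> 'a \<times> nat) set) \<Rightarrow> ('a + ('a \<times> 'a \<times> nat) set) \<Rightarrow> bool" where
  "subdiv_step r E x y \<longleftrightarrow> (\<exists>u v. E u v \<and>
      ((x = Inl u \<and> y = Inr (sd_vertex r u v 1)) \<or>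
       (\<exists>i. 1 \<le> i \<and> i < r \<and> x = Inr (sd_vertex r u v i) \<and> y = Inr (sd_vertex r u v (Suc i)))))"

definition subdiv_E :: "nat \<Rightarrow> ('a \<Rightarrow> 'a \<Rightarrow> bool) \<Rightarrow>
    ('a + ('a \<times> 'a \<times> nat) set) \<Rightarrow> ('a + ('a \<times> 'a \<times> nat) set) \<Rightarrow> bool" where
  "subdiv_E r E x y \<longleftrightarrow> subdiv_step r E x y \<or> subdiv_step r E y x"

end

theory Submission
  imports Defs
begin

(*
  One extra cop, the chaser, follows the robber's trail: it stands at the far end of a walk
  in the subdivided graph that ends at the robber and advances along it every round. The walk
  gets shorter whenever the robber stays put or steps back, so by induction on its length we
  may assume that he always moves to a fresh neighbour. In the subdivided graph this means
  that once he enters the path replacing an edge uw he runs through it to w, which takes r + 1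
  rounds. The remaining cops first gather on the initial positions of a winning strategy for G
  and then play it at this slower pace, walking along the subdivided edges during each
  traversal, so that the robber eventually arrives at a branch vertex occupied by a cop.
*)

lemma cop_move_refl: "cop_move R cs cs"
  unfolding cop_move_def by simp

lemma cop_move_Cons:
  "cop_move R (c # cs) (c' # cs') \<longleftrightarrow> (c' = c \<or> R c c') \<and> cop_move R cs cs'"
  unfolding cop_move_def by (auto simp: less_Suc_eq_0_disj)

lemma cop_move_closed:
  assumes "cop_move R cs cs'" "set cs \<subseteq> C" "\<And>x y. x \<in> C \<Longrightarrow> R x y \<Longrightarrow> y \<in> C"
  shows "set cs' \<subseteq> C"
proof
  fix p assume "p \<in> set cs'"
  then obtain i where i: "i < length cs'" "p = cs' ! i" by (auto simp: in_set_conv_nth)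
  then have "i < length cs" "cs ! i \<in> C" using assms(1,2) unfolding cop_move_def by auto
  then show "p \<in> C" using assms i unfolding cop_move_def by auto
qed

lemma cops_force_caught: "r \<in> set cs \<Longrightarrow> cops_force R cs r"
  by (rule cops_force.step[OF cop_move_refl]) simp

lemma cops_forceI:
  assumes "cop_move R cs cs'"
    and "\<And>r'. r \<notin> set cs' \<Longrightarrow> robber_move R r r' \<Longrightarrow> r' \<notin> set cs' \<Longrightarrow> cops_force R cs' r'"
  shows "cops_force R cs r"
  using assms by (metis cops_force.step)

lemma cops_force_unrestrict:
  assumes "cops_force (restrict_edges R C) cs r" "r \<in> C" "\<And>x y. x \<in> C \<Longrightarrow> R x y \<Longrightarrow> y \<in> C"
  shows "cops_force R cs r"
  using assms(1,2)
proof (induction rule: cops_force.induct)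
  case (step cs cs' r)
  show ?case
  proof (rule cops_forceI)
    show "cop_move R cs cs'"
      using step(1) unfolding cop_move_def restrict_edges_def by auto
  next
    fix r' assume "r \<notin> set cs'" "robber_move R r r'" "r' \<notin> set cs'"
    then show "cops_force R cs' r'"
      using step(2,3) assms(3) unfolding robber_move_def restrict_edges_def by blast
  qed
qed

lemma cops_force_restrict:
  assumes "cops_force R cs r" "set cs \<subseteq> C" "r \<in> C" "\<And>x y. x \<in> C \<Longrightarrow> R x y \<Longrightarrow> y \<in> C"
  shows "cops_force (restrict_edges R C) cs r"
  using assms(1-3)
proof (induction rule: cops_force.induct)
  case (step cs cs' r)
  have closed: "set cs' \<subseteq> C"
    using cop_move_closed[OF step(1,3) assms(4)] .
  show ?case
  proof (rule cops_forceI)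
    show "cop_move (restrict_edges R C) cs cs'"
      using step(1,3) closed unfolding cop_move_def restrict_edges_def by (auto simp: subset_iff)
  next
    fix r' assume "r \<notin> set cs'" "robber_move (restrict_edges R C) r r'" "r' \<notin> set cs'"
    then show "cops_force (restrict_edges R C) cs' r'"
      using step(2,4) closed unfolding robber_move_def restrict_edges_def by blast
  qed
qed

lemma rtranclp_imp_successively:
  "R\<^sup>*\<^sup>* a b \<Longrightarrow> \<exists>ws. ws \<noteq> [] \<and> hd ws = a \<and> last ws = b \<and> successively R ws"
proof (induction rule: converse_rtranclp_induct)
  case base
  show ?case by (intro exI[of _ "[b]"]) simp
next
  case (step a y)
  then obtain ws where "ws \<noteq> []" "hd ws = y" "last ws = b" "successively R ws" by blast
  with step(1) show ?case by (intro exI[of _ "a # ws"]) (auto simp: successively_Cons)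
qed

lemma successively_butlast: "successively R xs \<Longrightarrow> successively R (butlast xs)"
  by (induction R xs rule: successively.induct) (auto simp: successively_Cons)

lemma list_all2_ex_bound:
  fixes P :: "nat \<Rightarrow> 'a \<Rightarrow> 'b \<Rightarrow> bool"
  assumes "list_all2 (\<lambda>x y. \<exists>n. P n x y) xs ys"
  shows "\<exists>N. list_all2 (\<lambda>x y. \<exists>n\<le>N. P n x y) xs ys"
  using assms
proof (induction rule: list_all2_induct)
  case (Cons x xs y ys)
  obtain n where n: "P n x y"
    using Cons.hyps(1) ..
  obtain N where N: "list_all2 (\<lambda>x y. \<exists>n\<le>N. P n x y) xs ys"
    using Cons.IH ..
  have "\<exists>n'\<le>max n N. P n' x y"
    using n by (intro exI[of _ n]) (simp add: le_max_iff_disj)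
  moreover have "list_all2 (\<lambda>x y. \<exists>n'\<le>max n N. P n' x y) xs ys"
    using N by (rule list_all2_mono) (metis le_max_iff_disj)
  ultimately have "list_all2 (\<lambda>x y. \<exists>n'\<le>max n N. P n' x y) (x # xs) (y # ys)"
    by simp
  then show ?case ..
qed simp

lemma cop_move_towards:
  assumes "list_all2 (\<lambda>p t. \<exists>n\<le>Suc N. (R ^^ n) p t) ps ts"
  shows "\<exists>ps'. cop_move R ps ps' \<and> list_all2 (\<lambda>p t. \<exists>n\<le>N. (R ^^ n) p t) ps' ts"
  using assms
proof (induction rule: list_all2_induct)
  case Nil
  show ?case using cop_move_refl by blast
next
  case (Cons p ps t ts)
  obtain ps' where ps': "cop_move R ps ps'" "list_all2 (\<lambda>p t. \<exists>n\<le>N. (R ^^ n) p t) ps' ts"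
    using Cons.IH by blast
  obtain n where n: "n \<le> Suc N" "(R ^^ n) p t"
    using Cons.hyps(1) by blast
  have "\<exists>q. (q = p \<or> R p q) \<and> (\<exists>n\<le>N. (R ^^ n) q t)"
  proof (cases n)
    case 0
    then have "(R ^^ 0) p t"
      using n(2) by simp
    then show ?thesis
      using le0 by blast
  next
    case (Suc n')
    then obtain q where "R p q" "(R ^^ n') q t"
      using relpowp_Suc_D2[of n' R] n(2) by blast
    moreover have "n' \<le> N"
      using n(1) Suc by simp
    ultimately show ?thesis by blast
  qed
  then obtain q where "q = p \<or> R p q" "\<exists>n\<le>N. (R ^^ n) q t"
    by blast
  then show ?case
    using ps' by (intro exI[of _ "q # ps'"]) (simp add: cop_move_Cons)
qed

lemma component_closed: "x \<in> component R v \<Longrightarrow> R x y \<Longrightarrow> y \<in> component R v"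
  unfolding component_def by (simp add: rtranclp.rtrancl_into_rtrancl)

lemma component_subset:
  assumes "v \<in> V" "\<And>x y. R x y \<Longrightarrow> y \<in> V"
  shows "component R v \<subseteq> V"
proof
  fix y assume "y \<in> component R v"
  then have "R\<^sup>*\<^sup>* v y"
    unfolding component_def by simp
  then show "y \<in> V"
    using assms by (induction rule: rtranclp_induct) auto
qed

lemma component_eq:
  assumes "symp R" "R\<^sup>*\<^sup>* a b"
  shows "component R a = component R b"
proof -
  have "R\<^sup>*\<^sup>* b a"
    using assms symp_rtranclp by (blast dest: sympD)
  then show ?thesis
    using assms(2) unfolding component_def by (auto intro: rtranclp_trans)
qed

lemma cops_win_cop_number_conn:
  assumes "finite C" "C \<noteq> {}"
  shows "1 \<le> cop_number_conn C R \<and> cops_win C R (cop_number_conn C R)"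
proof -
  obtain cl where cl: "set cl = C"
    using assms(1) finite_list by blast
  have "1 \<le> length cl"
    using cl assms(2) by (cases cl) auto
  moreover have "cops_win C R (length cl)"
    unfolding cops_win_def using cl by (intro exI[of _ cl]) auto
  ultimately have "1 \<le> length cl \<and> cops_win C R (length cl)" ..
  then show ?thesis
    unfolding cop_number_conn_def by (rule LeastI)
qed

lemma cop_number_conn_le: "1 \<le> k \<Longrightarrow> cops_win C R k \<Longrightarrow> cop_number_conn C R \<le> k"
  unfolding cop_number_conn_def by (simp add: Least_le)

lemma cop_number_le:
  assumes "\<And>C. C \<in> components V E \<Longrightarrow> cop_number_conn C (restrict_edges E C) \<le> B"
  shows "cop_number V E \<le> B"
proof -
  let ?A = "insert 0 {cop_number_conn C (restrict_edges E C) | C. C \<in> components V E}"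
  have "?A \<subseteq> {..B}"
    using assms by auto
  then show ?thesis
    unfolding cop_number_def by (intro Max.boundedI) (auto intro: finite_subset)
qed

lemma cop_number_conn_le_cop_number:
  assumes "finite V" "C \<in> components V E"
  shows "cop_number_conn C (restrict_edges E C) \<le> cop_number V E"
proof -
  have "components V E = component E ` V"
    unfolding components_def by blast
  then have "finite {cop_number_conn C (restrict_edges E C) | C. C \<in> components V E}"
    using assms(1) by (simp add: setcompr_eq_image)
  then show ?thesis
    unfolding cop_number_def using assms(2) by (intro Max_ge) auto
qed

locale subdivision =
  fixes E :: "'a \<Rightarrow> 'a \<Rightarrow> bool" and r :: nat
  assumes sym: "E x y \<Longrightarrow> E y x" and r_pos: "1 \<le> r"
begin

abbreviation F :: "'a + ('a \<times> 'a \<times> nat) set \<Rightarrow> 'a + ('a \<times> 'a \<times> nat) set \<Rightarrow> bool" where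
  "F \<equiv> subdiv_E r E"

definition along :: "'a \<Rightarrow> 'a \<Rightarrow> nat \<Rightarrow> 'a + ('a \<times> 'a \<times> nat) set" where
  "along u v i = (if i = 0 then Inl u else if i \<le> r then Inr (sd_vertex r u v i) else Inl v)"

lemma along_0 [simp]: "along u v 0 = Inl u"
  by (simp add: along_def)

lemma along_Suc_r [simp]: "along u v (Suc r) = Inl v"
  by (simp add: along_def)

lemma along_interior: "1 \<le> i \<Longrightarrow> i \<le> r \<Longrightarrow> along u v i = Inr (sd_vertex r u v i)"
  by (simp add: along_def)

lemma along_swap: "i \<le> Suc r \<Longrightarrow> along u v i = along v u (Suc r - i)"
  unfolding along_def sd_vertex_def by (auto simp: insert_commute)

lemma symp_subdiv_E: "symp F"
  unfolding subdiv_E_def by (auto intro: sympI)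

lemma subdiv_E_sym: "F a b \<Longrightarrow> F b a"
  using symp_subdiv_E by (rule sympD)

lemma subdiv_E_along:
  assumes "E u v" "i \<le> r"
  shows "F (along u v i) (along u v (Suc i))"
proof -
  consider "i = 0" | "1 \<le> i" "i < r" | "i = r"
    using assms(2) by linarith
  then show ?thesis
  proof cases
    case 3
    have "sd_vertex r v u 1 = sd_vertex r u v r"
      unfolding sd_vertex_def by auto
    then show ?thesis using assms 3 sym[OF assms(1)] r_pos
      unfolding subdiv_E_def subdiv_step_def along_def by (auto intro!: exI[of _ v] exI[of _ u])
  qed (use assms r_pos in \<open>auto simp: subdiv_E_def subdiv_step_def along_def\<close>)
qed

lemma subdiv_step_cases:
  assumes "subdiv_step r E a b"
  obtains u v i where "E u v" "i \<le> r" "a = along u v i" "b = along u v (Suc i)"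
proof -
  obtain u v where "E u v" and
    "(a = Inl u \<and> b = Inr (sd_vertex r u v 1)) \<or>
     (\<exists>i. 1 \<le> i \<and> i < r \<and> a = Inr (sd_vertex r u v i) \<and> b = Inr (sd_vertex r u v (Suc i)))"
    using assms unfolding subdiv_step_def by blast
  then show ?thesis
  proof (elim disjE exE conjE)
    assume "a = Inl u" "b = Inr (sd_vertex r u v 1)"
    then show ?thesis using that[of u v 0] \<open>E u v\<close> r_pos by (simp add: along_def)
  next
    fix i assume "1 \<le> i" "i < r" "a = Inr (sd_vertex r u v i)" "b = Inr (sd_vertex r u v (Suc i))"
    then show ?thesis using that[of u v i] \<open>E u v\<close> by (simp add: along_def)
  qed
qed

lemma subdiv_E_cases:
  assumes "F a b"
  obtains u v i where "E u v" "i \<le> r" "a = along u v i" "b = along u v (Suc i)"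
proof -
  consider "subdiv_step r E a b" | "subdiv_step r E b a"
    using assms unfolding subdiv_E_def by blast
  then show ?thesis
  proof cases
    case 1
    then show ?thesis using that by (rule subdiv_step_cases)
  next
    case 2
    then obtain u v i where uv: "E u v" "i \<le> r" "b = along u v i" "a = along u v (Suc i)"
      by (rule subdiv_step_cases)
    then have "a = along v u (r - i)" "b = along v u (Suc (r - i))"
      using along_swap[of "Suc i" u v] along_swap[of i u v] by (auto simp: Suc_diff_le)
    then show ?thesis using that[of v u "r - i"] sym[OF uv(1)] by simp
  qed
qed

lemma along_eq_interior:
  assumes "1 \<le> i" "i \<le> r" "along u v i = along u' v' j"
  shows "(u' = u \<and> v' = v \<and> j = i) \<or> (u' = v \<and> v' = u \<and> j = Suc r - i)"
proof -
  have j: "1 \<le> j" "j \<le> r"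
    using assms by (auto simp: along_def split: if_splits)
  then have "sd_vertex r u v i = sd_vertex r u' v' j"
    using assms by (simp add: along_def)
  moreover have "(u, v, i) \<in> sd_vertex r u v i"
    unfolding sd_vertex_def by simp
  ultimately have "(u, v, i) = (u', v', j) \<or> (u, v, i) = (v', u', r + 1 - j)"
    unfolding sd_vertex_def by simp
  then show ?thesis
    using j assms(1,2) by auto
qed

lemma subdiv_E_interior_nbrs:
  assumes "1 \<le> i" "i \<le> r" "F (along u v i) b"
  shows "b = along u v (i - 1) \<or> b = along u v (Suc i)"
proof -
  obtain u' v' j where uv': "j \<le> r" "along u v i = along u' v' j" "b = along u' v' (Suc j)"
    using assms(3) by (rule subdiv_E_cases)
  from along_eq_interior[OF assms(1,2) uv'(2)]
  consider "u' = u" "v' = v" "j = i" | "u' = v" "v' = u" "j = Suc r - i"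
    by blast
  then show ?thesis
  proof cases
    case 2
    then have "b = along u v (Suc r - Suc (Suc r - i))"
      using uv'(3) along_swap[of "Suc (Suc r - i)" v u] assms(1) by simp
    then show ?thesis using assms(1,2) by (simp add: Suc_diff_Suc)
  qed (use uv' in simp)
qed

lemma subdiv_E_Inl_nbrs:
  assumes "F (Inl u) b"
  obtains v where "E u v" "b = along u v 1"
proof -
  obtain u' v' j where "E u' v'" "j \<le> r" "Inl u = along u' v' j" "b = along u' v' (Suc j)"
    using assms by (rule subdiv_E_cases)
  moreover from this have "j = 0"
    by (auto simp: along_def split: if_splits)
  ultimately show ?thesis using that by simp
qed

lemma along_eq_ends:
  assumes "i \<le> Suc r" "along x y i = along u v j"
  shows "x \<in> {u, v} \<or> y \<in> {u, v}"
proof (cases "1 \<le> i \<and> i \<le> r")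
  case True
  then show ?thesis using along_eq_interior[OF _ _ assms(2)] by auto
next
  case False
  then have "along x y i = Inl x \<or> along x y i = Inl y"
    using assms(1) by (auto simp: along_def)
  moreover have "along u v j = Inl u \<or> along u v j = Inl v \<or> along u v j = Inr (sd_vertex r u v j)"
    by (auto simp: along_def)
  ultimately show ?thesis using assms(2) by auto
qed

lemma rtranclp_along: "E u v \<Longrightarrow> F\<^sup>*\<^sup>* (Inl u) (along u v j)"
proof (induction j)
  case (Suc j)
  show ?case
  proof (cases "j \<le> r")
    case True
    then show ?thesis using Suc subdiv_E_along by (meson rtranclp.rtrancl_into_rtrancl)
  next
    case False
    then show ?thesis using Suc by (simp add: along_def)
  qed
qed simp

lemma rtranclp_subdiv_E_Inl: "E\<^sup>*\<^sup>* u v \<Longrightarrow> F\<^sup>*\<^sup>* (Inl u) (Inl v)"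
proof (induction rule: rtranclp_induct)
  case (step v w)
  then show ?case using rtranclp_along[OF step(2), of "Suc r"] by simp
qed simp

lemma rtranclp_edge_ends:
  assumes "E\<^sup>*\<^sup>* a b" "E x y" "b \<in> {x, y}"
  shows "E\<^sup>*\<^sup>* a x \<and> E\<^sup>*\<^sup>* a y"
  using assms sym[OF assms(2)] by (auto intro: rtranclp.rtrancl_into_rtrancl)

definition cops_along :: "'a list \<Rightarrow> 'a list \<Rightarrow> nat \<Rightarrow> ('a + ('a \<times> 'a \<times> nat) set) list" where
  "cops_along cs cs' i = map2 (\<lambda>u u'. if u = u' then Inl u else along u u' i) cs cs'"

lemma cops_along_0: "length cs = length cs' \<Longrightarrow> cops_along cs cs' 0 = map Inl cs"
  unfolding cops_along_def by (induction cs cs' rule: list_induct2) auto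

lemma cops_along_Suc_r: "length cs = length cs' \<Longrightarrow> cops_along cs cs' (Suc r) = map Inl cs'"
  unfolding cops_along_def by (induction cs cs' rule: list_induct2) auto

lemma cop_move_cops_along:
  assumes "cop_move E cs cs'" "i \<le> r"
  shows "cop_move F (cops_along cs cs' i) (cops_along cs cs' (Suc i))"
  using assms subdiv_E_along unfolding cop_move_def cops_along_def by auto

end

locale chaser_game = subdivision +
  fixes v0 :: 'a and k :: nat and cs0 :: "'a list"
  assumes length_cs0: "length cs0 = k"
    and cs0_reachable: "\<And>u. u \<in> set cs0 \<Longrightarrow> E\<^sup>*\<^sup>* v0 u"
    and cs0_wins: "\<And>\<rho>. E\<^sup>*\<^sup>* v0 \<rho> \<Longrightarrow> \<rho> \<in> set cs0 \<or> cops_force E cs0 \<rho>"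
begin

definition reachable :: "'a + ('a \<times> 'a \<times> nat) set \<Rightarrow> bool" where
  "reachable q \<longleftrightarrow> F\<^sup>*\<^sup>* (Inl v0) q"

text \<open>A trail lists the robber's recent positions, most recent first; the extra cop, the
  chaser, stands on its last vertex and walks along it towards the robber.\<close>

definition trail :: "('a + ('a \<times> 'a \<times> nat) set) list \<Rightarrow> bool" where
  "trail ws \<longleftrightarrow> ws \<noteq> [] \<and> successively F ws \<and> reachable (hd ws)"

definition free_cops :: "('a + ('a \<times> 'a \<times> nat) set) list \<Rightarrow> bool" where
  "free_cops fs \<longleftrightarrow> length fs = k \<and> (\<forall>p\<in>set fs. reachable p)"

definition shorter_trails_win :: "nat \<Rightarrow> bool" where
  "shorter_trails_win m \<longleftrightarrow>
     (\<forall>ws fs. length ws < m \<longrightarrow> trail ws \<longrightarrow> free_cops fs \<longrightarrow> cops_force F (last ws # fs) (hd ws))"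

lemma reachable_step: "reachable p \<Longrightarrow> F p q \<Longrightarrow> reachable q"
  unfolding reachable_def by (rule rtranclp.rtrancl_into_rtrancl)

lemma reachable_rtranclp: "reachable p \<Longrightarrow> reachable q \<Longrightarrow> F\<^sup>*\<^sup>* p q"
  unfolding reachable_def by (meson rtranclp_trans symp_rtranclp[OF symp_subdiv_E] sympD)

lemma free_cops_cop_move:
  assumes "free_cops fs" "cop_move F fs fs'"
  shows "free_cops fs'"
  unfolding free_cops_def
proof (intro conjI ballI)
  show "length fs' = k" using assms unfolding free_cops_def cop_move_def by simp
next
  fix p assume "p \<in> set fs'"
  then obtain i where i: "i < length fs'" "p = fs' ! i" by (auto simp: in_set_conv_nth)
  then have "i < length fs" using assms(2) unfolding cop_move_def by simp
  moreover have "reachable (fs ! i)"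
    using assms(1) \<open>i < length fs\<close> unfolding free_cops_def by simp
  ultimately show "reachable p"
    using assms(2) i unfolding cop_move_def by (auto intro: reachable_step)
qed

lemma free_cops_start: "free_cops (map Inl cs0)"
  using length_cs0 cs0_reachable rtranclp_subdiv_E_Inl unfolding free_cops_def reachable_def by auto

lemma trail_Cons: "trail ws \<Longrightarrow> F (hd ws) q \<Longrightarrow> trail (q # ws)"
  unfolding trail_def by (auto simp: successively_Cons subdiv_E_sym intro: reachable_step)

lemma trail_butlast:
  assumes "trail ws" "2 \<le> length ws"
  shows "trail (butlast ws)"
proof -
  obtain a b rest where ws: "ws = a # b # rest"
    using assms(2) by (metis Suc_le_length_iff numeral_2_eq_2)
  show ?thesis
    using assms(1) successively_butlast[of F ws] unfolding trail_def ws by simp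
qed

lemma trail_tl: "trail ws \<Longrightarrow> 2 \<le> length ws \<Longrightarrow> trail (tl ws)"
  unfolding trail_def
  by (cases ws) (auto simp: successively_Cons intro: reachable_step)

lemma shorter_trails_winD:
  "shorter_trails_win m \<Longrightarrow> length ws < m \<Longrightarrow> trail ws \<Longrightarrow> free_cops fs
    \<Longrightarrow> cops_force F (last ws # fs) (hd ws)"
  unfolding shorter_trails_win_def by blast

lemma trail_short_caught:
  assumes "trail ws" "length ws \<le> 2" "cop_move F fs fs'"
  shows "cops_force F (last ws # fs) (hd ws)"
proof (rule cops_forceI)
  show "cop_move F (last ws # fs) (hd ws # fs')"
  proof (cases ws)
    case (Cons a rest)
    with assms(1,2) consider "rest = []" | b where "rest = [b]" "F a b"
      unfolding trail_def by (cases rest) auto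
    then show ?thesis
    proof cases
      case 2
      then show ?thesis
        using assms(3) Cons subdiv_E_sym[OF 2(2)] by (simp add: cop_move_Cons)
    qed (use assms(3) Cons in \<open>simp add: cop_move_Cons\<close>)
  qed (use assms(1) trail_def in simp)
qed simp

lemma trail_last_step:
  assumes "trail ws" "2 \<le> length ws"
  shows "F (last ws) (last (butlast ws))"
proof -
  obtain a b rest where "ws = a # b # rest"
    using assms(2) by (metis Suc_le_length_iff numeral_2_eq_2)
  then have "successively F (butlast ws @ [last ws])" "butlast ws \<noteq> []"
    using assms(1) unfolding trail_def by (metis append_butlast_last_id list.distinct(1), simp)
  then have "F (last (butlast ws)) (last ws)"
    by (simp add: successively_append_iff)
  then show ?thesis
    by (rule subdiv_E_sym)
qed

lemma wins_if_trail_shrinks: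
  assumes IH: "shorter_trails_win (length ws)" and ws: "trail ws" "3 \<le> length ws"
    and fs: "free_cops fs" and r': "r' = hd ws \<or> r' = hd (tl ws)"
  shows "cops_force F (last (butlast ws) # fs) r'"
proof -
  obtain a b c rest where ws_eq: "ws = a # b # c # rest"
    using ws(2) by (metis Suc_le_length_iff numeral_3_eq_3)
  have trail_bl: "trail (butlast ws)"
    using ws ws_eq by (intro trail_butlast) simp_all
  from r' show ?thesis
  proof
    assume "r' = hd ws"
    then show ?thesis
      using shorter_trails_winD[OF IH _ trail_bl fs] ws_eq by simp
  next
    assume "r' = hd (tl ws)"
    moreover have "trail (tl (butlast ws))"
      using trail_tl[OF trail_bl] ws_eq by simp
    then have "cops_force F (last (tl (butlast ws)) # fs) (hd (tl (butlast ws)))"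
      by (rule shorter_trails_winD[OF IH _ _ fs, rotated]) (simp add: ws_eq)
    moreover have "hd (tl (butlast ws)) = hd (tl ws)" "last (tl (butlast ws)) = last (butlast ws)"
      using ws_eq by simp_all
    ultimately show ?thesis
      by simp
  qed
qed

text \<open>The chaser steps along the trail. If the robber stays or steps back, the trail gets
  shorter; only a move to a fresh neighbour keeps its length.\<close>

lemma chaser_round:
  assumes IH: "shorter_trails_win (length ws)" and ws: "trail ws" and fs: "free_cops fs"
    and move: "cop_move F fs fs'"
    and advance: "\<And>ws'. length ws' = length ws \<Longrightarrow> trail ws' \<Longrightarrow> hd (tl ws') = hd ws
      \<Longrightarrow> F (hd ws) (hd ws') \<Longrightarrow> hd ws' \<notin> {hd ws, hd (tl ws)} \<Longrightarrow> hd ws \<notin> set fs'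
      \<Longrightarrow> free_cops fs' \<Longrightarrow> cops_force F (last ws' # fs') (hd ws')"
  shows "cops_force F (last ws # fs) (hd ws)"
proof (cases "length ws \<le> 2")
  case True
  then show ?thesis using trail_short_caught ws move by blast
next
  case False
  let ?c = "last (butlast ws)"
  have fs': "free_cops fs'"
    using fs move by (rule free_cops_cop_move)
  show ?thesis
  proof (rule cops_forceI)
    show "cop_move F (last ws # fs) (?c # fs')"
      using move trail_last_step[OF ws] False by (simp add: cop_move_Cons)
  next
    fix r' assume not_caught: "hd ws \<notin> set (?c # fs')" and moves: "robber_move F (hd ws) r'"
      and "r' \<notin> set (?c # fs')"
    show "cops_force F (?c # fs') r'"
    proof (cases "r' \<in> {hd ws, hd (tl ws)}")
      case True
      then show ?thesis
        using wins_if_trail_shrinks[OF IH ws _ fs'] False by simp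
    next
      case fresh: False
      then have step: "F (hd ws) r'"
        using moves unfolding robber_move_def by simp
      obtain a b rest where ws_eq: "ws = a # b # rest"
        using False by (metis Suc_le_length_iff nat_le_linear numeral_2_eq_2)
      have "trail (butlast ws)"
        using ws False by (intro trail_butlast) simp_all
      then have "trail (r' # butlast ws)"
        using trail_Cons step ws_eq by simp
      moreover have "length (r' # butlast ws) = length ws" "hd (tl (r' # butlast ws)) = hd ws"
        using ws_eq by simp_all
      ultimately have "cops_force F (last (r' # butlast ws) # fs') r'"
        using advance[of "r' # butlast ws"] step fresh not_caught fs' by simp
      then show ?thesis
        using False ws_eq by simp
    qed
  qed
qed

definition heading :: "('a + ('a \<times> 'a \<times> nat) set) list \<Rightarrow> 'a \<Rightarrow> 'a \<Rightarrow> nat \<Rightarrow> bool" where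
  "heading ws x w i \<longleftrightarrow> 2 \<le> length ws \<and> hd ws = along x w i \<and> hd (tl ws) = along x w (i - 1)"

text \<open>An interior vertex of a path has only two neighbours, so a robber who never lets the
  trail shrink runs straight through the path, while the free cops make one move per step.\<close>

lemma travel_edge:
  assumes IH: "shorter_trails_win m" and xw: "E x w"
    and fr_move: "\<And>i. 1 \<le> i \<Longrightarrow> i \<le> r \<Longrightarrow> cop_move F (fr i) (fr (Suc i))"
    and arrival: "\<And>ws. length ws = m \<Longrightarrow> trail ws \<Longrightarrow> heading ws x w (Suc r)
      \<Longrightarrow> free_cops (fr (Suc r)) \<Longrightarrow> cops_force F (last ws # fr (Suc r)) (hd ws)"
  shows "i \<le> Suc r \<Longrightarrow> 1 \<le> i \<Longrightarrow> length ws = m \<Longrightarrow> trail ws \<Longrightarrow> heading ws x w i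
    \<Longrightarrow> free_cops (fr i) \<Longrightarrow> cops_force F (last ws # fr i) (hd ws)"
proof (induction i arbitrary: ws rule: inc_induct)
  case base
  then show ?case using arrival by blast
next
  case (step i)
  have i: "1 \<le> i" "i \<le> r"
    using step.prems step.hyps by simp_all
  show ?case
  proof (rule chaser_round)
    show "shorter_trails_win (length ws)"
      using IH step.prems by simp
    show "cop_move F (fr i) (fr (Suc i))"
      using fr_move i .
  next
    fix ws' assume ws': "length ws' = length ws" "trail ws'" "hd (tl ws') = hd ws"
      "F (hd ws) (hd ws')" "hd ws' \<notin> {hd ws, hd (tl ws)}" "free_cops (fr (Suc i))"
    have "hd ws = along x w i" "hd (tl ws) = along x w (i - 1)" "2 \<le> length ws"
      using step.prems unfolding heading_def by simp_all
    then have "hd ws' = along x w (Suc i)"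
      using subdiv_E_interior_nbrs[OF i, of x w "hd ws'"] ws'(4,5) by auto
    then have "heading ws' x w (Suc i)"
      using ws' \<open>hd ws = along x w i\<close> \<open>2 \<le> length ws\<close> unfolding heading_def by simp
    then show "cops_force F (last ws' # fr (Suc i)) (hd ws')"
      using step.IH ws' step.prems by simp
  qed (use step.prems in simp_all)
qed

text \<open>A position of G in which the robber has just chosen w and the cops on cs are to move
  corresponds to the robber having just entered the path towards w.\<close>

definition wins_entering :: "nat \<Rightarrow> 'a list \<Rightarrow> 'a \<Rightarrow> bool" where
  "wins_entering m cs w \<longleftrightarrow> (\<forall>ws x. E x w \<longrightarrow> length ws = m \<longrightarrow> trail ws \<longrightarrow> heading ws x w 1
     \<longrightarrow> free_cops (map Inl cs) \<longrightarrow> cops_force F (last ws # map Inl cs) (hd ws))"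

lemma wins_enteringD:
  "wins_entering m cs w \<Longrightarrow> E x w \<Longrightarrow> length ws = m \<Longrightarrow> trail ws \<Longrightarrow> heading ws x w 1
    \<Longrightarrow> free_cops (map Inl cs) \<Longrightarrow> cops_force F (last ws # map Inl cs) (hd ws)"
  unfolding wins_entering_def by blast

lemma wins_entering_occupied:
  assumes IH: "shorter_trails_win m" and "w \<in> set cs"
  shows "wins_entering m cs w"
  unfolding wins_entering_def
proof (intro allI impI)
  fix ws x assume "E x w" "length ws = m" "trail ws" "heading ws x w 1" "free_cops (map Inl cs)"
  moreover have "cops_force F (last ws' # map Inl cs) (hd ws')"
    if "heading ws' x w (Suc r)" for ws'
    using that assms(2) unfolding heading_def by (auto intro: cops_force_caught)
  ultimately show "cops_force F (last ws # map Inl cs) (hd ws)"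
    using travel_edge[OF IH \<open>E x w\<close>, where fr="\<lambda>_. map Inl cs" and i=1 and ws=ws] r_pos
    by (simp add: cop_move_refl)
qed

lemma wins_at_branch:
  assumes IH: "shorter_trails_win m" and ws: "length ws = m" "trail ws" "heading ws x z (Suc r)"
    and fs: "free_cops fs" and move: "cop_move F fs (map Inl cs)"
    and continue: "z \<in> set cs \<or> (\<forall>w. E z w \<longrightarrow> reachable (along z w 1) \<longrightarrow> wins_entering m cs w)"
  shows "cops_force F (last ws # fs) (hd ws)"
proof (rule chaser_round[OF _ ws(2) fs move])
  show "shorter_trails_win (length ws)"
    using IH ws(1) by simp
next
  fix ws' assume ws': "length ws' = length ws" "trail ws'" "hd (tl ws') = hd ws"
    "F (hd ws) (hd ws')" "hd ws' \<notin> {hd ws, hd (tl ws)}" "hd ws \<notin> set (map Inl cs)"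
    "free_cops (map Inl cs)"
  have z: "hd ws = Inl z" "2 \<le> length ws"
    using ws(3) unfolding heading_def by simp_all
  then obtain w where w: "E z w" "hd ws' = along z w 1"
    using subdiv_E_Inl_nbrs ws'(4) by metis
  have "reachable (hd ws')"
    using ws'(2) unfolding trail_def by simp
  moreover have "z \<notin> set cs"
    using ws'(6) z by auto
  ultimately have "wins_entering m cs w"
    using continue w by auto
  moreover have "heading ws' z w 1"
    using ws' w z unfolding heading_def by simp
  ultimately show "cops_force F (last ws' # map Inl cs) (hd ws')"
    using wins_enteringD w(1) ws'(1,2,7) ws(1) by blast
qed

lemma wins_entering_if_cops_force:
  assumes IH: "shorter_trails_win m" and "cops_force E cs w"
  shows "wins_entering m cs w"
  using assms(2)
proof (induction rule: cops_force.induct)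
  case (step cs cs' w)
  have len: "length cs = length cs'"
    using step(1) unfolding cop_move_def by simp
  define fr where "fr i = cops_along cs cs' (i - 1)" for i
  have fr1: "fr 1 = map Inl cs"
    using cops_along_0[OF len] unfolding fr_def by simp
  show ?case
    unfolding wins_entering_def
  proof (intro allI impI)
    fix ws x assume h: "E x w" "length ws = m" "trail ws" "heading ws x w 1" "free_cops (map Inl cs)"
    have "cops_force F (last ws # fr 1) (hd ws)"
    proof (rule travel_edge[OF IH h(1)])
      fix i :: nat assume "1 \<le> i" "i \<le> r"
      then show "cop_move F (fr i) (fr (Suc i))"
        using cop_move_cops_along[OF step(1), of "i - 1"] unfolding fr_def by simp
    next
      fix ws' assume arrived: "length ws' = m" "trail ws'" "heading ws' x w (Suc r)"
        "free_cops (fr (Suc r))"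
      have "cop_move F (fr (Suc r)) (map Inl cs')"
        using cop_move_cops_along[OF step(1), of r] cops_along_Suc_r[OF len] unfolding fr_def by simp
      moreover have "w \<in> set cs' \<or> (\<forall>w'. E w w' \<longrightarrow> reachable (along w w' 1) \<longrightarrow> wins_entering m cs' w')"
        using step(2) wins_entering_occupied[OF IH] unfolding robber_move_def by blast
      ultimately show "cops_force F (last ws' # fr (Suc r)) (hd ws')"
        using wins_at_branch[OF IH arrived] by blast
    qed (use h fr1 in simp_all)
    then show "cops_force F (last ws # map Inl cs) (hd ws)"
      using fr1 by simp
  qed
qed

lemma reachable_along_ends:
  assumes "reachable (along x y i)" "E x y" "i \<le> Suc r"
  shows "E\<^sup>*\<^sup>* v0 x \<and> E\<^sup>*\<^sup>* v0 y"
proof -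
  have "F\<^sup>*\<^sup>* (Inl v0) (along x y i)"
    using assms(1) unfolding reachable_def .
  then show ?thesis
    using assms(2,3)
  proof (induction "along x y i" arbitrary: x y i rule: rtranclp_induct)
    case base
    then have "x \<in> {v0} \<or> y \<in> {v0}"
      using along_eq_ends[of i x y v0 v0 0] by simp
    then show ?case
      using rtranclp_edge_ends[of v0 v0 x y] base by auto
  next
    case (step p)
    obtain u v j where uv: "E u v" "j \<le> r" "p = along u v j" "along x y i = along u v (Suc j)"
      using step.hyps(2) by (rule subdiv_E_cases)
    then have "E\<^sup>*\<^sup>* v0 u \<and> E\<^sup>*\<^sup>* v0 v"
      using step.hyps(3) by simp
    moreover have "x \<in> {u, v} \<or> y \<in> {u, v}"
      using along_eq_ends[OF step.prems(2) uv(4)] .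
    ultimately show ?case
      using rtranclp_edge_ends[OF _ step.prems(1)] by blast
  qed
qed

lemma wins_from_start:
  assumes IH: "shorter_trails_win m" and ws: "length ws = m" "trail ws"
  shows "cops_force F (last ws # map Inl cs0) (hd ws)"
proof (cases "length ws \<le> 2")
  case True
  then show ?thesis by (rule trail_short_caught[OF ws(2) _ cop_move_refl])
next
  case False
  then obtain a b rest where ws_eq: "ws = a # b # rest"
    by (metis Suc_le_length_iff nat_le_linear numeral_2_eq_2)
  have "F a b"
    using ws(2) unfolding trail_def ws_eq by simp
  then obtain x z i where xz: "E x z" "i \<le> r" "b = along x z i" "a = along x z (Suc i)"
    using subdiv_E_sym subdiv_E_cases by metis
  have arrival: "cops_force F (last ws' # map Inl cs0) (hd ws')"
    if "length ws' = m" "trail ws'" "heading ws' x z (Suc r)" for ws'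
  proof (rule wins_at_branch[OF IH that free_cops_start cop_move_refl])
    show "z \<in> set cs0 \<or> (\<forall>w. E z w \<longrightarrow> reachable (along z w 1) \<longrightarrow> wins_entering m cs0 w)"
    proof (intro disjI2 allI impI)
      fix w assume "E z w" "reachable (along z w 1)"
      then have "E\<^sup>*\<^sup>* v0 w"
        using reachable_along_ends[of z w 1] r_pos by simp
      then show "wins_entering m cs0 w"
        using cs0_wins wins_entering_occupied[OF IH] wins_entering_if_cops_force[OF IH] by blast
    qed
  qed
  have "heading ws x z (Suc i)"
    using ws_eq xz unfolding heading_def by simp
  then show ?thesis
    using travel_edge[OF IH xz(1), where fr="\<lambda>_. map Inl cs0" and i="Suc i" and ws=ws]
      arrival xz(2) ws free_cops_start
    by (simp add: cop_move_refl)
qed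

lemma wins_gathering:
  assumes IH: "shorter_trails_win m"
  shows "length ws = m \<Longrightarrow> trail ws \<Longrightarrow> free_cops fs
    \<Longrightarrow> list_all2 (\<lambda>p t. \<exists>n\<le>N. (F ^^ n) p t) fs (map Inl cs0)
    \<Longrightarrow> cops_force F (last ws # fs) (hd ws)"
proof (induction N arbitrary: ws fs)
  case 0
  then have "fs = map Inl cs0"
    by (simp add: list.rel_eq)
  then show ?case
    using wins_from_start[OF IH] 0 by simp
next
  case (Suc N)
  obtain fs' where move: "cop_move F fs fs'"
    and closer: "list_all2 (\<lambda>p t. \<exists>n\<le>N. (F ^^ n) p t) fs' (map Inl cs0)"
    using cop_move_towards[OF Suc.prems(4)] by blast
  show ?case
  proof (rule chaser_round[OF _ Suc.prems(2,3) move])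
    show "shorter_trails_win (length ws)"
      using IH Suc.prems(1) by simp
  next
    fix ws' assume "length ws' = length ws" "trail ws'" "free_cops fs'"
    then show "cops_force F (last ws' # fs') (hd ws')"
      using Suc.IH closer Suc.prems(1) by simp
  qed
qed

theorem chaser_wins:
  assumes "trail ws" "free_cops fs"
  shows "cops_force F (last ws # fs) (hd ws)"
  using assms
proof (induction "length ws" arbitrary: ws fs rule: less_induct)
  case less
  have IH: "shorter_trails_win (length ws)"
    unfolding shorter_trails_win_def using less.hyps by blast
  have "list_all2 (\<lambda>p t. \<exists>n. (F ^^ n) p t) fs (map Inl cs0)"
  proof (rule list_all2_all_nthI)
    show "length fs = length (map Inl cs0)"
      using less.prems(2) length_cs0 unfolding free_cops_def by simp
  next
    fix i assume i: "i < length fs"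
    then have "reachable (fs ! i)" "reachable (map Inl cs0 ! i)"
      using less.prems(2) free_cops_start unfolding free_cops_def by simp_all
    then have "F\<^sup>*\<^sup>* (fs ! i) (map Inl cs0 ! i)"
      by (rule reachable_rtranclp)
    then show "\<exists>n. (F ^^ n) (fs ! i) (map Inl cs0 ! i)"
      by (rule rtranclp_imp_relpowp)
  qed
  from list_all2_ex_bound[where P="\<lambda>n. F ^^ n", OF this]
  obtain N where "list_all2 (\<lambda>p t. \<exists>n\<le>N. (F ^^ n) p t) fs (map Inl cs0)" ..
  then show ?case
    by (rule wins_gathering[OF IH refl less.prems])
qed

lemma cops_win_component:
  "cops_win (component F (Inl v0)) (restrict_edges F (component F (Inl v0))) (Suc k)"
proof -
  let ?D = "component F (Inl v0)"
  have start: "set (replicate (Suc k) (Inl v0)) \<subseteq> ?D"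
    unfolding component_def by (simp add: set_replicate_conv_if)
  show ?thesis
    unfolding cops_win_def
  proof (intro exI[of _ "replicate (Suc k) (Inl v0)"] conjI ballI)
    fix rob assume rob: "rob \<in> ?D"
    then have "reachable rob"
      unfolding component_def reachable_def by simp
    moreover have "reachable (Inl v0)"
      unfolding reachable_def by simp
    ultimately have "F\<^sup>*\<^sup>* rob (Inl v0)"
      by (rule reachable_rtranclp)
    then obtain ws where ws: "ws \<noteq> []" "hd ws = rob" "last ws = Inl v0" "successively F ws"
      using rtranclp_imp_successively by metis
    then have "trail ws"
      using \<open>reachable rob\<close> unfolding trail_def by simp
    moreover have "free_cops (replicate k (Inl v0))"
      unfolding free_cops_def reachable_def by simp
    ultimately have "cops_force F (last ws # replicate k (Inl v0)) (hd ws)"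
      by (rule chaser_wins)
    then have "cops_force F (replicate (Suc k) (Inl v0)) rob"
      using ws by simp
    then have "cops_force (restrict_edges F ?D) (replicate (Suc k) (Inl v0)) rob"
      using start rob by (rule cops_force_restrict) (erule component_closed)
    then show "rob \<in> set (replicate (Suc k) (Inl v0))
        \<or> cops_force (restrict_edges F ?D) (replicate (Suc k) (Inl v0)) rob" ..
  qed (use start in simp_all)
qed

end

context subdivision begin

lemma components_subdiv:
  assumes "\<And>x y. E x y \<Longrightarrow> x \<in> V" and "C \<in> components (subdiv_V r V E) F"
  obtains v0 where "v0 \<in> V" "C = component F (Inl v0)"
proof -
  obtain p where p: "p \<in> subdiv_V r V E" "C = component F p"
    using assms(2) unfolding components_def by blast
  obtain v0 where "v0 \<in> V" "F\<^sup>*\<^sup>* (Inl v0) p"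
  proof -
    from p(1) consider u where "u \<in> V" "p = Inl u"
      | u v i where "E u v" "1 \<le> i" "i \<le> r" "p = Inr (sd_vertex r u v i)"
      unfolding subdiv_V_def by blast
    then show ?thesis
    proof cases
      case (2 u v i)
      then have "p = along u v i"
        by (simp add: along_interior)
      then show ?thesis
        using that[of u] assms(1) 2(1) rtranclp_along by blast
    qed (use that in blast)
  qed
  then show ?thesis
    using that p(2) component_eq[OF symp_subdiv_E] by metis
qed

lemma chaser_game_of_cops_win:
  assumes "cops_win (component E v0) (restrict_edges E (component E v0)) k"
  obtains cs0 where "chaser_game E r v0 k cs0"
proof -
  let ?C = "component E v0"
  obtain cs0 where cs0: "length cs0 = k" "set cs0 \<subseteq> ?C"
    "\<And>\<rho>. \<rho> \<in> ?C \<Longrightarrow> \<rho> \<in> set cs0 \<or> cops_force (restrict_edges E ?C) cs0 \<rho>"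
    using assms unfolding cops_win_def by blast
  have "chaser_game E r v0 k cs0"
  proof
    show "length cs0 = k" by (fact cs0(1))
    show "E\<^sup>*\<^sup>* v0 u" if "u \<in> set cs0" for u
      using cs0(2) that unfolding component_def by auto
    show "\<rho> \<in> set cs0 \<or> cops_force E cs0 \<rho>" if "E\<^sup>*\<^sup>* v0 \<rho>" for \<rho>
    proof -
      have "\<rho> \<in> ?C"
        using that unfolding component_def by simp
      then have "\<rho> \<in> set cs0 \<or> cops_force (restrict_edges E ?C) cs0 \<rho>"
        by (rule cs0(3))
      moreover have "cops_force E cs0 \<rho>" if "cops_force (restrict_edges E ?C) cs0 \<rho>"
        using that \<open>\<rho> \<in> ?C\<close> by (rule cops_force_unrestrict) (erule component_closed)
      ultimately show ?thesis by blast
    qed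
  qed
  then show ?thesis ..
qed

lemma cop_number_conn_subdiv_component:
  assumes "finite (component E v0)"
  shows "cop_number_conn (component F (Inl v0)) (restrict_edges F (component F (Inl v0)))
    \<le> Suc (cop_number_conn (component E v0) (restrict_edges E (component E v0)))"
proof -
  let ?C = "component E v0"
  have "?C \<noteq> {}"
    unfolding component_def by auto
  then have "cops_win ?C (restrict_edges E ?C) (cop_number_conn ?C (restrict_edges E ?C))"
    using cops_win_cop_number_conn assms by blast
  then obtain cs0 where "chaser_game E r v0 (cop_number_conn ?C (restrict_edges E ?C)) cs0"
    by (rule chaser_game_of_cops_win)
  then show ?thesis
    by (intro cop_number_conn_le chaser_game.cops_win_component) simp_all
qed

end

theorem proposition13:
  fixes V :: "'a set" and E :: "'a \<Rightarrow> 'a \<Rightarrow> bool" and r :: nat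
  assumes "graph V E" and "1 \<le> r"
  shows "cop_number (subdiv_V r V E) (subdiv_E r E) \<le> cop_number V E + 1"
proof -
  have fin: "finite V" and in_V: "\<And>x y. E x y \<Longrightarrow> x \<in> V" "\<And>x y. E x y \<Longrightarrow> y \<in> V"
    and sym: "\<And>x y. E x y \<Longrightarrow> E y x"
    using assms(1) unfolding graph_def by auto
  interpret subdivision E r
    using sym assms(2) by unfold_locales
  show ?thesis
  proof (rule cop_number_le)
    fix D assume "D \<in> components (subdiv_V r V E) F"
    from components_subdiv[OF in_V(1) this]
    obtain v0 where v0: "v0 \<in> V" "D = component F (Inl v0)" .
    let ?C = "component E v0"
    have "finite ?C"
      using component_subset[OF v0(1) in_V(2)] fin by (rule finite_subset)
    then have "cop_number_conn D (restrict_edges F D) \<le> Suc (cop_number_conn ?C (restrict_edges E ?C))"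
      unfolding v0(2) by (rule cop_number_conn_subdiv_component)
    also have "\<dots> \<le> cop_number V E + 1"
      using cop_number_conn_le_cop_number[OF fin] v0(1) unfolding components_def by auto
    finally show "cop_number_conn D (restrict_edges F D) \<le> cop_number V E + 1" .
  qed
qed

end
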